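(* Let $\Lambda=\langle a_1\rangle\perp\langle a_2\rangle$ be a skew-hermitian lattice such that $N(a_2)\in N(a_1)k^{*2}$ and the extension $k(a_1)/k$ is ramified. Then there exists a skew-hermitian lattice $L=\langle q\rangle\perp\langle\epsilon q\rangle$, with $q\in D^*$ and $\epsilon\in k^*$, such that $H(\Lambda)=H(L)$. Moreover, $q$ can be taken to be $q'$ for any pure quaternion $q'\in D^*$ with $N(q')\in N(a_1)k^{*2}$.
   Context: $k$ is a dyadic local field of characteristic $0$, $D$ the quaternion division algebra over $k$ with involution $q\mapsto\bar q$, reduced norm $N$, maximal order $\mathcal{O}_D$. A skew-hermitian space is a free $D$-module $V$ with nondegenerate $h$, $D$-linear in the first variable, $h(x,y)=-\overline{h(y,x)}$. For a pure quaternion $a$, $\langle a\rangle$ denotes a rank-one lattice $\mathcal{O}_Dx$ with $h(x,x)=a$, and $\perp$ denotes orthogonal sum. $H(\Lambda)\supseteq k^{*2}$ is defined by $H(\Lambda)/k^{*2}=\theta(\mathcal{U}^+_k(\Lambda))$, where $\mathcal{U}^+_k(\Lambda)$ is the group of isometries of $h$ preserving $\Lambda$ and $\theta$ the spinor norm ($\theta((s;\sigma))=N(\sigma)k^{*2}$ for simple rotations $(s;\sigma)(x)=x-h(x,s)\sigma^{-1}s$, $\sigma-\bar\sigma=h(s,s)$). *)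

theory Defs
  imports Complex_Main
begin

text \<open>The field k is a type of class field_char_0 together with a normalized
discrete valuation v (the value at 0 is irrelevant) for which k is complete,
with finite residue field of characteristic 2 (i.e. v 2 > 0).\<close>

definition val_ring :: "('k::field_char_0 \<Rightarrow> int) \<Rightarrow> 'k set" where
  "val_ring v = {x. x = 0 \<or> v x \<ge> 0}"

definition dyadic_local_field :: "('k::field_char_0 \<Rightarrow> int) \<Rightarrow> bool" where
  "dyadic_local_field v \<longleftrightarrow>
     (\<forall>x y. x \<noteq> 0 \<longrightarrow> y \<noteq> 0 \<longrightarrow> v (x * y) = v x + v y) \<and>
     (\<forall>x y. x \<noteq> 0 \<longrightarrow> y \<noteq> 0 \<longrightarrow> x + y \<noteq> 0 \<longrightarrow> v (x + y) \<ge> min (v x) (v y)) \<and>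
     (\<exists>\<pi>. \<pi> \<noteq> 0 \<and> v \<pi> = 1) \<and>
     (\<forall>f :: nat \<Rightarrow> 'k.
        (\<forall>n::int. \<exists>N. \<forall>m\<ge>N. \<forall>p\<ge>N. f m = f p \<or> v (f m - f p) \<ge> n) \<longrightarrow>
        (\<exists>L. \<forall>n::int. \<exists>N. \<forall>m\<ge>N. f m = L \<or> v (f m - L) \<ge> n)) \<and>
     (\<exists>S. finite S \<and> S \<subseteq> val_ring v \<and>
        (\<forall>x\<in>val_ring v. \<exists>s\<in>S. x = s \<or> v (x - s) \<ge> 1)) \<and>
     v 2 \<ge> 1"

text \<open>Elements a + b i + c j + d ij with i^2 = alpha, j^2 = beta, ij = - ji.\<close>

datatype 'k quat = Quat 'k 'k 'k 'k

fun qre :: "'k quat \<Rightarrow> 'k" where "qre (Quat a b c d) = a"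

definition qof :: "'k::field \<Rightarrow> 'k quat" where
  "qof c = Quat c 0 0 0"

fun qadd :: "'k::field quat \<Rightarrow> 'k quat \<Rightarrow> 'k quat" where
  "qadd (Quat a1 b1 c1 d1) (Quat a2 b2 c2 d2) = Quat (a1+a2) (b1+b2) (c1+c2) (d1+d2)"

fun qneg :: "'k::field quat \<Rightarrow> 'k quat" where
  "qneg (Quat a b c d) = Quat (-a) (-b) (-c) (-d)"

definition qsub :: "'k::field quat \<Rightarrow> 'k quat \<Rightarrow> 'k quat" where
  "qsub p q = qadd p (qneg q)"

fun qscal :: "'k::field \<Rightarrow> 'k quat \<Rightarrow> 'k quat" where
  "qscal t (Quat a b c d) = Quat (t*a) (t*b) (t*c) (t*d)"

fun qmul :: "'k::field \<Rightarrow> 'k \<Rightarrow> 'k quat \<Rightarrow> 'k quat \<Rightarrow> 'k quat" where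
  "qmul \<alpha> \<beta> (Quat a1 b1 c1 d1) (Quat a2 b2 c2 d2) =
     Quat (a1*a2 + \<alpha>*b1*b2 + \<beta>*c1*c2 - \<alpha>*\<beta>*d1*d2)
          (a1*b2 + b1*a2 - \<beta>*c1*d2 + \<beta>*d1*c2)
          (a1*c2 + c1*a2 + \<alpha>*b1*d2 - \<alpha>*d1*b2)
          (a1*d2 + d1*a2 + b1*c2 - c1*b2)"

fun qconj :: "'k::field quat \<Rightarrow> 'k quat" where
  "qconj (Quat a b c d) = Quat a (-b) (-c) (-d)"

text \<open>Reduced norm N(q) = q * conj q.\<close>
fun qnorm :: "'k::field \<Rightarrow> 'k \<Rightarrow> 'k quat \<Rightarrow> 'k" where
  "qnorm \<alpha> \<beta> (Quat a b c d) = a^2 - \<alpha>*b^2 - \<beta>*c^2 + \<alpha>*\<beta>*d^2"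

definition qinv :: "'k::field \<Rightarrow> 'k \<Rightarrow> 'k quat \<Rightarrow> 'k quat" where
  "qinv \<alpha> \<beta> q = qscal (inverse (qnorm \<alpha> \<beta> q)) (qconj q)"

definition qpure :: "'k::field quat \<Rightarrow> bool" where
  "qpure q \<longleftrightarrow> qre q = 0"

definition quat_division :: "'k::field \<Rightarrow> 'k \<Rightarrow> bool" where
  "quat_division \<alpha> \<beta> \<longleftrightarrow> \<alpha> \<noteq> 0 \<and> \<beta> \<noteq> 0 \<and> (\<forall>q. qnorm \<alpha> \<beta> q = 0 \<longrightarrow> q = Quat 0 0 0 0)"

text \<open>Maximal order of the division algebra D: quaternions of integral reduced norm.\<close>
definition max_order :: "('k::field_char_0 \<Rightarrow> int) \<Rightarrow> 'k \<Rightarrow> 'k \<Rightarrow> 'k quat set" where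
  "max_order v \<alpha> \<beta> = {q. qnorm \<alpha> \<beta> q \<in> val_ring v}"

text \<open>The subfield k(a) of D, and ramification of k(a)/k: the unique extension of v
to k(a) is w(x) = v(N(x))/2 (N restricted to k(a) is the field norm); k(a)/k is
ramified iff the ramification index is > 1, i.e. the value group w(k(a)^*) is strictly
larger than v(k^*) = Z.\<close>
definition qsubfield :: "'k::field quat \<Rightarrow> 'k quat set" where
  "qsubfield a = {qadd (qof x) (qscal y a) | x y. True}"

definition ext_val :: "('k::field_char_0 \<Rightarrow> int) \<Rightarrow> 'k \<Rightarrow> 'k \<Rightarrow> 'k quat \<Rightarrow> rat" where
  "ext_val v \<alpha> \<beta> e = of_int (v (qnorm \<alpha> \<beta> e)) / 2"

definition ramified_ext :: "('k::field_char_0 \<Rightarrow> int) \<Rightarrow> 'k \<Rightarrow> 'k \<Rightarrow> 'k quat \<Rightarrow> bool" where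
  "ramified_ext v \<alpha> \<beta> a \<longleftrightarrow>
     (\<exists>e\<in>qsubfield a. e \<noteq> Quat 0 0 0 0 \<and> ext_val v \<alpha> \<beta> e \<notin> \<int>)"

text \<open>V = D x D with basis x1 = (1,0), x2 = (0,1), h(x_i,x_i) = a_i, h(x1,x2) = 0:
h(x,y) = x1 a1 conj(y1) + x2 a2 conj(y2) (D-linear in the first variable).\<close>

type_synonym 'k vec2 = "'k quat \<times> 'k quat"

definition vadd :: "'k::field vec2 \<Rightarrow> 'k vec2 \<Rightarrow> 'k vec2" where
  "vadd x y = (qadd (fst x) (fst y), qadd (snd x) (snd y))"

definition vsmul :: "'k::field \<Rightarrow> 'k \<Rightarrow> 'k quat \<Rightarrow> 'k vec2 \<Rightarrow> 'k vec2" where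
  "vsmul \<alpha> \<beta> d x = (qmul \<alpha> \<beta> d (fst x), qmul \<alpha> \<beta> d (snd x))"

definition vsub :: "'k::field vec2 \<Rightarrow> 'k vec2 \<Rightarrow> 'k vec2" where
  "vsub x y = (qsub (fst x) (fst y), qsub (snd x) (snd y))"

definition hform :: "'k::field \<Rightarrow> 'k \<Rightarrow> 'k quat \<Rightarrow> 'k quat \<Rightarrow> 'k vec2 \<Rightarrow> 'k vec2 \<Rightarrow> 'k quat" where
  "hform \<alpha> \<beta> a1 a2 x y =
     qadd (qmul \<alpha> \<beta> (qmul \<alpha> \<beta> (fst x) a1) (qconj (fst y)))
          (qmul \<alpha> \<beta> (qmul \<alpha> \<beta> (snd x) a2) (qconj (snd y)))"

definition diag_lattice :: "('k::field_char_0 \<Rightarrow> int) \<Rightarrow> 'k \<Rightarrow> 'k \<Rightarrow> 'k vec2 set" where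
  "diag_lattice v \<alpha> \<beta> = max_order v \<alpha> \<beta> \<times> max_order v \<alpha> \<beta>"

definition isometry :: "'k::field \<Rightarrow> 'k \<Rightarrow> 'k quat \<Rightarrow> 'k quat \<Rightarrow> ('k vec2 \<Rightarrow> 'k vec2) \<Rightarrow> bool" where
  "isometry \<alpha> \<beta> a1 a2 u \<longleftrightarrow> bij u \<and>
     (\<forall>x y. u (vadd x y) = vadd (u x) (u y)) \<and>
     (\<forall>d x. u (vsmul \<alpha> \<beta> d x) = vsmul \<alpha> \<beta> d (u x)) \<and>
     (\<forall>x y. hform \<alpha> \<beta> a1 a2 (u x) (u y) = hform \<alpha> \<beta> a1 a2 x y)"

definition srot :: "'k::field \<Rightarrow> 'k \<Rightarrow> 'k quat \<Rightarrow> 'k quat \<Rightarrow> 'k vec2 \<Rightarrow> 'k quat \<Rightarrow> 'k vec2 \<Rightarrow> 'k vec2" where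
  "srot \<alpha> \<beta> a1 a2 s \<sigma> x =
     vsub x (vsmul \<alpha> \<beta> (qmul \<alpha> \<beta> (hform \<alpha> \<beta> a1 a2 x s) (qinv \<alpha> \<beta> \<sigma>)) s)"

definition srot_data :: "'k::field \<Rightarrow> 'k \<Rightarrow> 'k quat \<Rightarrow> 'k quat \<Rightarrow> 'k vec2 \<Rightarrow> 'k quat \<Rightarrow> bool" where
  "srot_data \<alpha> \<beta> a1 a2 s \<sigma> \<longleftrightarrow> \<sigma> \<noteq> Quat 0 0 0 0 \<and>
     qsub \<sigma> (qconj \<sigma>) = hform \<alpha> \<beta> a1 a2 s s"

text \<open>H(Lambda): the set of c in k^* such that c k^{*2} = theta(u) for some isometry u
preserving Lambda, where theta(u) = N(sigma_1)...N(sigma_m) k^{*2} for a factorisation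
u = (s_1;sigma_1) ... (s_m;sigma_m) into simple rotations.\<close>
definition Hgroup :: "('k::field_char_0 \<Rightarrow> int) \<Rightarrow> 'k \<Rightarrow> 'k \<Rightarrow> 'k quat \<Rightarrow> 'k quat \<Rightarrow> 'k set" where
  "Hgroup v \<alpha> \<beta> a1 a2 = {c. c \<noteq> 0 \<and>
     (\<exists>u. isometry \<alpha> \<beta> a1 a2 u \<and> u ` diag_lattice v \<alpha> \<beta> = diag_lattice v \<alpha> \<beta> \<and>
        (\<exists>rs :: ('k vec2 \<times> 'k quat) list.
           (\<forall>(s,\<sigma>)\<in>set rs. srot_data \<alpha> \<beta> a1 a2 s \<sigma>) \<and>
           u = foldr (\<lambda>(s,\<sigma>) f. srot \<alpha> \<beta> a1 a2 s \<sigma> \<circ> f) rs id \<and>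
           (\<exists>t. t \<noteq> 0 \<and> c = prod_list (map (\<lambda>(s,\<sigma>). qnorm \<alpha> \<beta> \<sigma>) rs) * t^2)))}"

end

theory Submission
  imports Defs
begin

text \<open>Write \<open>a \<sim> b\<close> if \<open>m a (conj m) = c b\<close> for a unit \<open>m\<close> of \<open>\<O>\<^sub>D\<close> and \<open>c \<in> k\<^sup>*\<close>.
If \<open>a\<^sub>i \<sim> b\<^sub>i\<close> with scalars \<open>c\<^sub>i\<close>, right multiplication by the \<open>m\<^sub>i\<close> on the two coordinates
is a similitude \<open>\<langle>a\<^sub>1\<rangle> \<perp> \<langle>a\<^sub>2\<rangle> \<rightarrow> \<langle>b\<^sub>1\<rangle> \<perp> \<langle>(c\<^sub>2/c\<^sub>1) b\<^sub>2\<rangle>\<close> preserving the lattice; conjugating by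
it maps simple rotations to simple rotations and rescales their spinor norms by squares, so
the two groups \<open>H\<close> coincide. It remains to see that pure quaternions with the same norm
class are \<open>\<sim>\<close>-related when \<open>k(a)/k\<close> is ramified. For \<open>N(b) = N(a)\<close> the element \<open>\<mu> = a + b\<close>
satisfies \<open>b \<mu> = \<mu> a\<close>, and so does \<open>\<mu> e\<close> for every \<open>e \<in> k(a)\<close>; since \<open>k(a)/k\<close> is ramified,
\<open>N(k(a)\<^sup>*)\<close> takes values of both parities, so \<open>e\<close> can be chosen with \<open>\<mu> e\<close> a unit.\<close>

section \<open>Quaternion arithmetic\<close>

abbreviation Q0 :: "'k::field quat" where "Q0 \<equiv> Quat 0 0 0 0"

lemma qmul_assoc: "qmul \<alpha> \<beta> (qmul \<alpha> \<beta> p q) r = qmul \<alpha> \<beta> p (qmul \<alpha> \<beta> q r)"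
  by (cases p; cases q; cases r) (simp add: algebra_simps)

lemma qnorm_mul: "qnorm \<alpha> \<beta> (qmul \<alpha> \<beta> p q) = qnorm \<alpha> \<beta> p * qnorm \<alpha> \<beta> q"
  by (cases p; cases q) (simp add: algebra_simps power2_eq_square)

lemma qconj_mul: "qconj (qmul \<alpha> \<beta> p q) = qmul \<alpha> \<beta> (qconj q) (qconj p)"
  by (cases p; cases q) (simp add: algebra_simps)

lemma qmul_qof_left: "qmul \<alpha> \<beta> (qof c) p = qscal c p"
  by (cases p) (simp add: qof_def)

lemma qmul_qof_right: "qmul \<alpha> \<beta> p (qof c) = qscal c p"
  by (cases p) (simp add: qof_def algebra_simps)

lemma qmul_scal_left: "qmul \<alpha> \<beta> (qscal c p) q = qscal c (qmul \<alpha> \<beta> p q)"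
  by (cases p; cases q) (simp add: algebra_simps)

lemma qmul_scal_right: "qmul \<alpha> \<beta> p (qscal c q) = qscal c (qmul \<alpha> \<beta> p q)"
  by (cases p; cases q) (simp add: algebra_simps)

lemma qscal_qscal: "qscal c (qscal d p) = qscal (c * d) p"
  by (cases p) (simp add: algebra_simps)

lemma qscal_one [simp]: "qscal 1 p = p"
  by (cases p) simp

lemma qscal_add: "qscal c (qadd p q) = qadd (qscal c p) (qscal c q)"
  by (cases p; cases q) (simp add: algebra_simps)

lemma qscal_eq_0_iff: "qscal c p = Q0 \<longleftrightarrow> c = 0 \<or> p = Q0"
  by (cases p) auto

lemma qadd_commute: "qadd p q = qadd q p"
  by (cases p; cases q) (simp add: algebra_simps)

lemma qmul_add_left: "qmul \<alpha> \<beta> (qadd p q) r = qadd (qmul \<alpha> \<beta> p r) (qmul \<alpha> \<beta> q r)"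
  by (cases p; cases q; cases r) (simp add: algebra_simps)

lemma qmul_add_right: "qmul \<alpha> \<beta> p (qadd q r) = qadd (qmul \<alpha> \<beta> p q) (qmul \<alpha> \<beta> p r)"
  by (cases p; cases q; cases r) (simp add: algebra_simps)

lemma qmul_qconj_right: "qmul \<alpha> \<beta> p (qconj p) = qof (qnorm \<alpha> \<beta> p)"
  by (cases p) (simp add: qof_def algebra_simps power2_eq_square)

lemma qmul_qconj_left: "qmul \<alpha> \<beta> (qconj p) p = qof (qnorm \<alpha> \<beta> p)"
  by (cases p) (simp add: qof_def algebra_simps power2_eq_square)

lemma qconj_qconj [simp]: "qconj (qconj p) = p"
  by (cases p) simp

lemma qconj_qscal: "qconj (qscal c p) = qscal c (qconj p)"
  by (cases p) simp

lemma qconj_qof [simp]: "qconj (qof c) = qof c"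
  by (simp add: qof_def)

lemma qnorm_qconj [simp]: "qnorm \<alpha> \<beta> (qconj p) = qnorm \<alpha> \<beta> p"
  by (cases p) simp

lemma qnorm_qscal: "qnorm \<alpha> \<beta> (qscal c p) = c\<^sup>2 * qnorm \<alpha> \<beta> p"
  by (cases p) (simp add: algebra_simps power2_eq_square)

lemma qnorm_qof [simp]: "qnorm \<alpha> \<beta> (qof c) = c\<^sup>2"
  by (simp add: qof_def)

lemma qnorm_eq_0_iff: "quat_division \<alpha> \<beta> \<Longrightarrow> qnorm \<alpha> \<beta> p = 0 \<longleftrightarrow> p = Q0"
  by (auto simp: quat_division_def)

lemma qmul_qinv_right: "qnorm \<alpha> \<beta> p \<noteq> 0 \<Longrightarrow> qmul \<alpha> \<beta> p (qinv \<alpha> \<beta> p) = qof 1"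
  by (simp add: qinv_def qmul_scal_right qmul_qconj_right) (simp add: qof_def)

lemma qmul_qinv_left: "qnorm \<alpha> \<beta> p \<noteq> 0 \<Longrightarrow> qmul \<alpha> \<beta> (qinv \<alpha> \<beta> p) p = qof 1"
  by (simp add: qinv_def qmul_scal_left qmul_qconj_left) (simp add: qof_def)

lemma qinv_qscal: "c \<noteq> 0 \<Longrightarrow> qinv \<alpha> \<beta> (qscal c p) = qscal (inverse c) (qinv \<alpha> \<beta> p)"
  by (cases "qnorm \<alpha> \<beta> p = 0")
     (simp_all add: qinv_def qnorm_qscal qconj_qscal qscal_qscal field_simps power2_eq_square)

lemma qnorm_qinv: "qnorm \<alpha> \<beta> (qinv \<alpha> \<beta> p) = inverse (qnorm \<alpha> \<beta> p)"
  by (cases "qnorm \<alpha> \<beta> p = 0")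
     (simp_all add: qinv_def qnorm_qscal field_simps power2_eq_square)

lemma qmul_qmul_qinv: "qnorm \<alpha> \<beta> m \<noteq> 0 \<Longrightarrow> qmul \<alpha> \<beta> (qmul \<alpha> \<beta> x m) (qinv \<alpha> \<beta> m) = x"
  by (simp add: qmul_assoc qmul_qinv_right qmul_qof_right)

lemma qmul_qinv_qmul: "qnorm \<alpha> \<beta> m \<noteq> 0 \<Longrightarrow> qmul \<alpha> \<beta> (qmul \<alpha> \<beta> x (qinv \<alpha> \<beta> m)) m = x"
  by (simp add: qmul_assoc qmul_qinv_left qmul_qof_right)

lemma qpure_qscal: "qpure p \<Longrightarrow> qpure (qscal c p)"
  by (cases p) (simp add: qpure_def)

lemma qpure_square: "qpure p \<Longrightarrow> qmul \<alpha> \<beta> p p = qof (- qnorm \<alpha> \<beta> p)"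
  by (cases p) (simp add: qpure_def qof_def algebra_simps power2_eq_square)

lemma qsubfield_commute: "qmul \<alpha> \<beta> a (qadd (qof x) (qscal y a)) = qmul \<alpha> \<beta> (qadd (qof x) (qscal y a)) a"
  by (cases a) (simp add: qof_def algebra_simps)

section \<open>The valuation\<close>

context
  fixes v :: "'k::field_char_0 \<Rightarrow> int"
  assumes v: "dyadic_local_field v"
begin

lemma val_mult: "x \<noteq> 0 \<Longrightarrow> y \<noteq> 0 \<Longrightarrow> v (x * y) = v x + v y"
  using v by (simp add: dyadic_local_field_def)

lemma val_one: "v 1 = 0"
  using val_mult[of 1 1] by simp

lemma val_inverse: "x \<noteq> 0 \<Longrightarrow> v (inverse x) = - v x"
  using val_mult[of x "inverse x"] val_one by simp

lemma val_power: "x \<noteq> 0 \<Longrightarrow> v (x ^ n) = int n * v x"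
  by (induction n) (auto simp: val_one val_mult algebra_simps)

lemma val_surj: "\<exists>s. s \<noteq> 0 \<and> v s = k"
proof -
  obtain p where p: "p \<noteq> 0" "v p = 1"
    using v by (auto simp: dyadic_local_field_def)
  show ?thesis
  proof (cases "k \<ge> 0")
    case True
    then show ?thesis
      using p val_power[OF p(1), of "nat k"] by (intro exI[of _ "p ^ nat k"]) auto
  next
    case False
    then show ?thesis
      using p val_power[OF p(1), of "nat (-k)"] val_inverse[of "p ^ nat (-k)"]
      by (intro exI[of _ "inverse (p ^ nat (-k))"]) auto
  qed
qed

text \<open>Ramification means that the norms from \<open>k(a)\<^sup>*\<close> have a value of odd parity; together
with the squares of \<open>k\<^sup>*\<close> they then realise every value.\<close>

lemma ramified_ext_qnorm_val_surj:
  assumes qd: "quat_division \<alpha> \<beta>" and ram: "ramified_ext v \<alpha> \<beta> a"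
  shows "\<exists>x y. qnorm \<alpha> \<beta> (qadd (qof x) (qscal y a)) \<noteq> 0 \<and>
           v (qnorm \<alpha> \<beta> (qadd (qof x) (qscal y a))) = k"
proof -
  obtain x0 y0 where e: "qadd (qof x0) (qscal y0 a) \<noteq> Q0"
      "ext_val v \<alpha> \<beta> (qadd (qof x0) (qscal y0 a)) \<notin> \<int>"
    using ram by (auto simp: ramified_ext_def qsubfield_def)
  define n where "n = qnorm \<alpha> \<beta> (qadd (qof x0) (qscal y0 a))"
  have n0: "n \<noteq> 0"
    using e(1) qnorm_eq_0_iff[OF qd] by (simp add: n_def)
  have odd_n: "odd (v n)"
  proof
    assume "even (v n)"
    then obtain j where "v n = 2 * j" by (auto elim: evenE)
    then show False using e(2) by (simp add: ext_val_def n_def)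
  qed
  show ?thesis
  proof (cases "even k")
    case True
    then obtain j where j: "k = 2 * j" by (auto elim: evenE)
    obtain s where s: "s \<noteq> 0" "v s = j" using val_surj by blast
    have "qadd (qof s) (qscal 0 a) = qof s" by (cases a) (simp add: qof_def)
    then have "qnorm \<alpha> \<beta> (qadd (qof s) (qscal 0 a)) \<noteq> 0 \<and>
        v (qnorm \<alpha> \<beta> (qadd (qof s) (qscal 0 a))) = k"
      using s j val_power[OF s(1), of 2] by (simp add: qof_def)
    then show ?thesis by blast
  next
    case False
    then have "even (k - v n)" using odd_n by simp
    then obtain j where j: "k - v n = 2 * j" by (blast elim: evenE)
    obtain s where s: "s \<noteq> 0" "v s = j" using val_surj by blast
    have "qadd (qof (s * x0)) (qscal (s * y0) a) = qscal s (qadd (qof x0) (qscal y0 a))"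
      by (cases a) (simp add: qof_def algebra_simps)
    then show ?thesis
      using s j n0 val_power[OF s(1), of 2]
      by (intro exI[of _ "s * x0"] exI[of _ "s * y0"]) (simp add: qnorm_qscal val_mult n_def)
  qed
qed

end

definition qunit :: "('k::field_char_0 \<Rightarrow> int) \<Rightarrow> 'k \<Rightarrow> 'k \<Rightarrow> 'k quat \<Rightarrow> bool" where
  "qunit v \<alpha> \<beta> m \<longleftrightarrow> qnorm \<alpha> \<beta> m \<noteq> 0 \<and> v (qnorm \<alpha> \<beta> m) = 0"

lemma qunit_qof_1: "dyadic_local_field v \<Longrightarrow> qunit v \<alpha> \<beta> (qof 1)"
  by (simp add: qunit_def val_one)

lemma qunit_qconj: "qunit v \<alpha> \<beta> (qconj m) \<longleftrightarrow> qunit v \<alpha> \<beta> m"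
  by (simp add: qunit_def)

lemma qunit_qinv: "dyadic_local_field v \<Longrightarrow> qunit v \<alpha> \<beta> m \<Longrightarrow> qunit v \<alpha> \<beta> (qinv \<alpha> \<beta> m)"
  by (simp add: qunit_def qnorm_qinv val_inverse)

lemma qunit_qmul:
  "dyadic_local_field v \<Longrightarrow> qunit v \<alpha> \<beta> m \<Longrightarrow> qunit v \<alpha> \<beta> n \<Longrightarrow> qunit v \<alpha> \<beta> (qmul \<alpha> \<beta> m n)"
  by (simp add: qunit_def qnorm_mul val_mult)

lemma max_order_qmul_qunit:
  assumes "dyadic_local_field v" "qunit v \<alpha> \<beta> m" "x \<in> max_order v \<alpha> \<beta>"
  shows "qmul \<alpha> \<beta> x m \<in> max_order v \<alpha> \<beta>"
proof (cases "qnorm \<alpha> \<beta> x = 0")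
  case False
  then show ?thesis
    using assms by (simp add: max_order_def val_ring_def qunit_def qnorm_mul val_mult)
qed (simp add: max_order_def val_ring_def qnorm_mul)

section \<open>Similitudes of skew-hermitian spaces and the group \<open>H\<close>\<close>

lemma qsub_eq_qadd_qmul: "qsub p q = qadd p (qmul \<alpha> \<beta> (qof (-1)) q)"
  by (cases p; cases q) (simp add: qsub_def qof_def)

lemma vsub_eq_vadd_vsmul: "vsub x y = vadd x (vsmul \<alpha> \<beta> (qof (-1)) y)"
  by (simp add: vsub_def vadd_def vsmul_def qsub_eq_qadd_qmul)

lemma qsub_qconj_qscal: "qsub (qscal c p) (qconj (qscal c p)) = qscal c (qsub p (qconj p))"
  by (cases p) (simp add: qsub_def algebra_simps)

lemma prod_list_qnorm_qscal:
  "prod_list (map (\<lambda>(s, \<sigma>). qnorm \<alpha> \<beta> \<sigma>) (map (\<lambda>(s, \<sigma>). (g s, qscal k \<sigma>)) rs))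
   = (k\<^sup>2) ^ length rs * prod_list (map (\<lambda>(s, \<sigma>). qnorm \<alpha> \<beta> \<sigma>) rs)"
  by (induction rs) (auto simp: qnorm_qscal)

locale hform_similitude =
  fixes v :: "'k::field_char_0 \<Rightarrow> int" and \<alpha> \<beta> :: 'k and a1 a2 b1 b2 :: "'k quat"
    and c :: 'k and \<phi> \<psi> :: "'k vec2 \<Rightarrow> 'k vec2"
  assumes psi_phi: "\<And>x. \<psi> (\<phi> x) = x" and phi_psi: "\<And>x. \<phi> (\<psi> x) = x"
    and phi_vadd: "\<And>x y. \<phi> (vadd x y) = vadd (\<phi> x) (\<phi> y)"
    and psi_vadd: "\<And>x y. \<psi> (vadd x y) = vadd (\<psi> x) (\<psi> y)"
    and phi_vsmul: "\<And>d x. \<phi> (vsmul \<alpha> \<beta> d x) = vsmul \<alpha> \<beta> d (\<phi> x)"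
    and psi_vsmul: "\<And>d x. \<psi> (vsmul \<alpha> \<beta> d x) = vsmul \<alpha> \<beta> d (\<psi> x)"
    and phi_lattice: "\<phi> ` diag_lattice v \<alpha> \<beta> = diag_lattice v \<alpha> \<beta>"
    and psi_lattice: "\<psi> ` diag_lattice v \<alpha> \<beta> = diag_lattice v \<alpha> \<beta>"
    and c_nonzero: "c \<noteq> 0"
    and hform_phi: "\<And>x y. hform \<alpha> \<beta> a1 a2 (\<phi> x) (\<phi> y) = qscal c (hform \<alpha> \<beta> b1 b2 x y)"
begin

lemma hform_psi: "hform \<alpha> \<beta> b1 b2 (\<psi> x) (\<psi> y) = qscal (inverse c) (hform \<alpha> \<beta> a1 a2 x y)"
  using hform_phi[of "\<psi> x" "\<psi> y"] c_nonzero by (simp add: phi_psi qscal_qscal)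

lemma inverse_similitude: "hform_similitude v \<alpha> \<beta> b1 b2 a1 a2 (inverse c) \<psi> \<phi>"
  by unfold_locales
    (simp_all add: psi_phi phi_psi phi_vadd psi_vadd phi_vsmul psi_vsmul phi_lattice
      psi_lattice c_nonzero hform_psi)

lemma psi_vsub: "\<psi> (vsub x y) = vsub (\<psi> x) (\<psi> y)"
  by (simp add: vsub_eq_vadd_vsmul[of _ _ \<alpha> \<beta>] psi_vadd psi_vsmul)

lemma srot_conj:
  "\<psi> \<circ> srot \<alpha> \<beta> a1 a2 s \<sigma> \<circ> \<phi> = srot \<alpha> \<beta> b1 b2 (\<psi> s) (qscal (inverse c) \<sigma>)"
proof
  fix x
  have "hform \<alpha> \<beta> a1 a2 (\<phi> x) s = qscal c (hform \<alpha> \<beta> b1 b2 x (\<psi> s))"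
    using hform_phi[of x "\<psi> s"] by (simp add: phi_psi)
  then show "(\<psi> \<circ> srot \<alpha> \<beta> a1 a2 s \<sigma> \<circ> \<phi>) x = srot \<alpha> \<beta> b1 b2 (\<psi> s) (qscal (inverse c) \<sigma>) x"
    using c_nonzero
    by (simp add: srot_def psi_vsub psi_vsmul psi_phi qinv_qscal qmul_scal_left qmul_scal_right)
qed

lemma srot_data_conj:
  "srot_data \<alpha> \<beta> a1 a2 s \<sigma> \<Longrightarrow> srot_data \<alpha> \<beta> b1 b2 (\<psi> s) (qscal (inverse c) \<sigma>)"
  using c_nonzero by (simp add: srot_data_def qscal_eq_0_iff qsub_qconj_qscal hform_psi)

lemma foldr_srot_conj:
  "\<psi> \<circ> foldr (\<lambda>(s, \<sigma>) f. srot \<alpha> \<beta> a1 a2 s \<sigma> \<circ> f) rs id \<circ> \<phi>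
   = foldr (\<lambda>(s, \<sigma>) f. srot \<alpha> \<beta> b1 b2 s \<sigma> \<circ> f) (map (\<lambda>(s, \<sigma>). (\<psi> s, qscal (inverse c) \<sigma>)) rs) id"
proof (induction rs)
  case Nil
  then show ?case by (auto simp: psi_phi)
next
  case (Cons r rs)
  obtain s \<sigma> where r: "r = (s, \<sigma>)" by (cases r)
  have "\<psi> \<circ> foldr (\<lambda>(s, \<sigma>) f. srot \<alpha> \<beta> a1 a2 s \<sigma> \<circ> f) (r # rs) id \<circ> \<phi>
      = (\<psi> \<circ> srot \<alpha> \<beta> a1 a2 s \<sigma> \<circ> \<phi>) \<circ> (\<psi> \<circ> foldr (\<lambda>(s, \<sigma>) f. srot \<alpha> \<beta> a1 a2 s \<sigma> \<circ> f) rs id \<circ> \<phi>)"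
    by (simp add: r fun_eq_iff phi_psi)
  also have "\<dots> = srot \<alpha> \<beta> b1 b2 (\<psi> s) (qscal (inverse c) \<sigma>)
      \<circ> foldr (\<lambda>(s, \<sigma>) f. srot \<alpha> \<beta> b1 b2 s \<sigma> \<circ> f) (map (\<lambda>(s, \<sigma>). (\<psi> s, qscal (inverse c) \<sigma>)) rs) id"
    by (simp only: srot_conj Cons.IH)
  also have "\<dots> = foldr (\<lambda>(s, \<sigma>) f. srot \<alpha> \<beta> b1 b2 s \<sigma> \<circ> f)
      (map (\<lambda>(s, \<sigma>). (\<psi> s, qscal (inverse c) \<sigma>)) (r # rs)) id"
    by (simp add: r)
  finally show ?case .
qed

lemma isometry_conj:
  assumes u: "isometry \<alpha> \<beta> a1 a2 u"
  shows "isometry \<alpha> \<beta> b1 b2 (\<psi> \<circ> u \<circ> \<phi>)"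
proof -
  have "bij u" and u_vadd: "\<And>x y. u (vadd x y) = vadd (u x) (u y)"
    and u_vsmul: "\<And>d x. u (vsmul \<alpha> \<beta> d x) = vsmul \<alpha> \<beta> d (u x)"
    and u_hform: "\<And>x y. hform \<alpha> \<beta> a1 a2 (u x) (u y) = hform \<alpha> \<beta> a1 a2 x y"
    using u by (auto simp: isometry_def)
  moreover have "bij \<phi>" "bij \<psi>" by (metis bijI' psi_phi phi_psi)+
  ultimately show ?thesis
    using c_nonzero
    by (simp add: isometry_def bij_comp phi_vadd psi_vadd phi_vsmul psi_vsmul hform_psi hform_phi
        qscal_qscal)
qed

lemma lattice_conj:
  assumes "u ` diag_lattice v \<alpha> \<beta> = diag_lattice v \<alpha> \<beta>"
  shows "(\<psi> \<circ> u \<circ> \<phi>) ` diag_lattice v \<alpha> \<beta> = diag_lattice v \<alpha> \<beta>"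
proof -
  have "(\<psi> \<circ> u \<circ> \<phi>) ` diag_lattice v \<alpha> \<beta> = \<psi> ` u ` \<phi> ` diag_lattice v \<alpha> \<beta>"
    by (simp add: image_comp)
  then show ?thesis by (simp add: assms phi_lattice psi_lattice)
qed

lemma Hgroup_subset: "Hgroup v \<alpha> \<beta> a1 a2 \<subseteq> Hgroup v \<alpha> \<beta> b1 b2"
proof
  fix z assume "z \<in> Hgroup v \<alpha> \<beta> a1 a2"
  then obtain u rs t where z: "z \<noteq> 0" and u: "isometry \<alpha> \<beta> a1 a2 u"
    and uL: "u ` diag_lattice v \<alpha> \<beta> = diag_lattice v \<alpha> \<beta>"
    and rs: "\<forall>(s, \<sigma>)\<in>set rs. srot_data \<alpha> \<beta> a1 a2 s \<sigma>"
    and u_eq: "u = foldr (\<lambda>(s, \<sigma>) f. srot \<alpha> \<beta> a1 a2 s \<sigma> \<circ> f) rs id"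
    and t: "t \<noteq> 0" "z = prod_list (map (\<lambda>(s, \<sigma>). qnorm \<alpha> \<beta> \<sigma>) rs) * t\<^sup>2"
    unfolding Hgroup_def by blast
  define rs' where "rs' = map (\<lambda>(s, \<sigma>). (\<psi> s, qscal (inverse c) \<sigma>)) rs"
  have "\<forall>(s, \<sigma>)\<in>set rs'. srot_data \<alpha> \<beta> b1 b2 s \<sigma>"
    using rs srot_data_conj by (auto simp: rs'_def)
  moreover have "\<psi> \<circ> u \<circ> \<phi> = foldr (\<lambda>(s, \<sigma>) f. srot \<alpha> \<beta> b1 b2 s \<sigma> \<circ> f) rs' id"
    by (simp add: u_eq rs'_def foldr_srot_conj)
  moreover have "z = prod_list (map (\<lambda>(s, \<sigma>). qnorm \<alpha> \<beta> \<sigma>) rs') * (c ^ length rs * t)\<^sup>2"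
    using c_nonzero unfolding rs'_def prod_list_qnorm_qscal t(2)
    by (simp add: power_mult_distrib power_mult[symmetric] mult.commute power_inverse)
  moreover have "c ^ length rs * t \<noteq> 0" using c_nonzero t(1) by simp
  ultimately show "z \<in> Hgroup v \<alpha> \<beta> b1 b2"
    unfolding Hgroup_def using z isometry_conj[OF u] lattice_conj[OF uL] by blast
qed

lemma Hgroup_eq: "Hgroup v \<alpha> \<beta> a1 a2 = Hgroup v \<alpha> \<beta> b1 b2"
proof -
  interpret inv: hform_similitude v \<alpha> \<beta> b1 b2 a1 a2 "inverse c" \<psi> \<phi>
    by (rule inverse_similitude)
  show ?thesis using Hgroup_subset inv.Hgroup_subset by (rule subset_antisym)
qed

end

lemma image_eq_if_inverse_on:
  assumes "\<And>x. x \<in> L \<Longrightarrow> f x \<in> L" and "\<And>x. x \<in> L \<Longrightarrow> g x \<in> L" and "\<And>x. f (g x) = x"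
  shows "f ` L = L"
proof
  show "f ` L \<subseteq> L" using assms(1) by blast
  show "L \<subseteq> f ` L"
  proof
    fix x assume "x \<in> L"
    then have "g x \<in> L" by (rule assms(2))
    moreover have "x = f (g x)" by (simp add: assms(3))
    ultimately show "x \<in> f ` L" by (rule rev_image_eqI)
  qed
qed

lemma qmul_sandwich:
  "qmul \<alpha> \<beta> (qmul \<alpha> \<beta> (qmul \<alpha> \<beta> x m) a) (qconj (qmul \<alpha> \<beta> y m))
   = qmul \<alpha> \<beta> (qmul \<alpha> \<beta> x (qmul \<alpha> \<beta> (qmul \<alpha> \<beta> m a) (qconj m))) (qconj y)"
  by (simp add: qconj_mul qmul_assoc)

lemma Hgroup_eq_diag_rescale:
  assumes v: "dyadic_local_field v"
    and m1: "qunit v \<alpha> \<beta> m1" and m2: "qunit v \<alpha> \<beta> m2" and c1: "c1 \<noteq> 0"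
    and a1: "qmul \<alpha> \<beta> (qmul \<alpha> \<beta> m1 a1) (qconj m1) = qscal c1 b1"
    and a2: "qmul \<alpha> \<beta> (qmul \<alpha> \<beta> m2 a2) (qconj m2) = qscal c2 b2"
  shows "Hgroup v \<alpha> \<beta> a1 a2 = Hgroup v \<alpha> \<beta> b1 (qscal (c2 / c1) b2)"
proof -
  define \<phi> where "\<phi> x = (qmul \<alpha> \<beta> (fst x) m1, qmul \<alpha> \<beta> (snd x) m2)" for x
  define \<psi> where "\<psi> x = (qmul \<alpha> \<beta> (fst x) (qinv \<alpha> \<beta> m1), qmul \<alpha> \<beta> (snd x) (qinv \<alpha> \<beta> m2))" for x
  have n: "qnorm \<alpha> \<beta> m1 \<noteq> 0" "qnorm \<alpha> \<beta> m2 \<noteq> 0"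
    using m1 m2 by (auto simp: qunit_def)
  have psi_phi: "\<psi> (\<phi> x) = x" and phi_psi: "\<phi> (\<psi> x) = x" for x
    using n by (simp_all add: \<phi>_def \<psi>_def qmul_qmul_qinv qmul_qinv_qmul)
  have phi_L: "\<phi> x \<in> diag_lattice v \<alpha> \<beta>" and psi_L: "\<psi> x \<in> diag_lattice v \<alpha> \<beta>"
    if "x \<in> diag_lattice v \<alpha> \<beta>" for x
    using that m1 m2 max_order_qmul_qunit[OF v] qunit_qinv[OF v]
    by (auto simp: \<phi>_def \<psi>_def diag_lattice_def mem_Times_iff)
  interpret hform_similitude v \<alpha> \<beta> a1 a2 b1 "qscal (c2 / c1) b2" c1 \<phi> \<psi>
  proof
    show "\<phi> ` diag_lattice v \<alpha> \<beta> = diag_lattice v \<alpha> \<beta>"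
      by (rule image_eq_if_inverse_on[OF phi_L psi_L phi_psi])
    show "\<psi> ` diag_lattice v \<alpha> \<beta> = diag_lattice v \<alpha> \<beta>"
      by (rule image_eq_if_inverse_on[OF psi_L phi_L psi_phi])
    show "hform \<alpha> \<beta> a1 a2 (\<phi> x) (\<phi> y) = qscal c1 (hform \<alpha> \<beta> b1 (qscal (c2 / c1) b2) x y)" for x y
      using c1 by (simp add: \<phi>_def hform_def qmul_sandwich a1 a2 qmul_scal_left qmul_scal_right
          qscal_add qscal_qscal)
    show "\<phi> (vadd x y) = vadd (\<phi> x) (\<phi> y)" "\<psi> (vadd x y) = vadd (\<psi> x) (\<psi> y)" for x y
      by (simp_all add: \<phi>_def \<psi>_def vadd_def qmul_add_left)
    show "\<phi> (vsmul \<alpha> \<beta> d x) = vsmul \<alpha> \<beta> d (\<phi> x)" "\<psi> (vsmul \<alpha> \<beta> d x) = vsmul \<alpha> \<beta> d (\<psi> x)" for d x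
      by (simp_all add: \<phi>_def \<psi>_def vsmul_def qmul_assoc)
  qed (fact psi_phi phi_psi c1)+
  show ?thesis by (rule Hgroup_eq)
qed

section \<open>Similarity of pure quaternions\<close>

definition unit_similar :: "('k::field_char_0 \<Rightarrow> int) \<Rightarrow> 'k \<Rightarrow> 'k \<Rightarrow> 'k quat \<Rightarrow> 'k quat \<Rightarrow> bool" where
  "unit_similar v \<alpha> \<beta> a b \<longleftrightarrow>
     (\<exists>m c. qunit v \<alpha> \<beta> m \<and> c \<noteq> 0 \<and> qmul \<alpha> \<beta> (qmul \<alpha> \<beta> m a) (qconj m) = qscal c b)"

lemma unit_similar_sym:
  assumes "unit_similar v \<alpha> \<beta> a b" shows "unit_similar v \<alpha> \<beta> b a"
proof -
  obtain m c where m: "qunit v \<alpha> \<beta> m" and c: "c \<noteq> 0"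
    and mab: "qmul \<alpha> \<beta> (qmul \<alpha> \<beta> m a) (qconj m) = qscal c b"
    using assms by (auto simp: unit_similar_def)
  define n where "n = qnorm \<alpha> \<beta> m"
  have n0: "n \<noteq> 0" using m by (simp add: qunit_def n_def)
  have "qscal c (qmul \<alpha> \<beta> (qmul \<alpha> \<beta> (qconj m) b) m)
      = qmul \<alpha> \<beta> (qmul \<alpha> \<beta> (qconj m) (qscal c b)) m"
    by (simp add: qmul_scal_left qmul_scal_right)
  also have "\<dots> = qmul \<alpha> \<beta> (qmul \<alpha> \<beta> (qmul \<alpha> \<beta> (qconj m) m) a) (qmul \<alpha> \<beta> (qconj m) m)"
    by (simp add: mab[symmetric] qmul_assoc)
  also have "\<dots> = qscal (n\<^sup>2) a"
    by (simp add: qmul_qconj_left qmul_qof_left qmul_qof_right qscal_qscal n_def power2_eq_square)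
  finally have "qscal (inverse c) (qscal c (qmul \<alpha> \<beta> (qmul \<alpha> \<beta> (qconj m) b) m))
      = qscal (inverse c) (qscal (n\<^sup>2) a)"
    by (rule arg_cong)
  then have "qmul \<alpha> \<beta> (qmul \<alpha> \<beta> (qconj m) b) (qconj (qconj m)) = qscal (n\<^sup>2 / c) a"
    using c by (simp add: qscal_qscal divide_inverse mult.commute)
  moreover have "n\<^sup>2 / c \<noteq> 0" using c n0 by simp
  ultimately show ?thesis
    using m qunit_qconj unfolding unit_similar_def by blast
qed

lemma unit_similar_trans:
  assumes v: "dyadic_local_field v"
    and "unit_similar v \<alpha> \<beta> a b" and "unit_similar v \<alpha> \<beta> b e"
  shows "unit_similar v \<alpha> \<beta> a e"
proof -
  obtain m c where m: "qunit v \<alpha> \<beta> m" "c \<noteq> 0" "qmul \<alpha> \<beta> (qmul \<alpha> \<beta> m a) (qconj m) = qscal c b"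
    using assms(2) by (auto simp: unit_similar_def)
  obtain n d where n: "qunit v \<alpha> \<beta> n" "d \<noteq> 0" "qmul \<alpha> \<beta> (qmul \<alpha> \<beta> n b) (qconj n) = qscal d e"
    using assms(3) by (auto simp: unit_similar_def)
  have "qmul \<alpha> \<beta> (qmul \<alpha> \<beta> (qmul \<alpha> \<beta> n m) a) (qconj (qmul \<alpha> \<beta> n m))
      = qmul \<alpha> \<beta> (qmul \<alpha> \<beta> n (qmul \<alpha> \<beta> (qmul \<alpha> \<beta> m a) (qconj m))) (qconj n)"
    by (simp add: qconj_mul qmul_assoc)
  also have "\<dots> = qscal (c * d) e"
    by (simp add: m(3) n(3) qmul_scal_left qmul_scal_right qscal_qscal mult.commute)
  finally have "qmul \<alpha> \<beta> (qmul \<alpha> \<beta> (qmul \<alpha> \<beta> n m) a) (qconj (qmul \<alpha> \<beta> n m)) = qscal (c * d) e" .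
  moreover have "c * d \<noteq> 0" using m(2) n(2) by simp
  ultimately show ?thesis
    using qunit_qmul[OF v n(1) m(1)] unfolding unit_similar_def by blast
qed

lemma Hgroup_eq_if_unit_similar:
  assumes v: "dyadic_local_field v"
    and "unit_similar v \<alpha> \<beta> a1 b" and "unit_similar v \<alpha> \<beta> a2 b"
  shows "\<exists>\<epsilon>. \<epsilon> \<noteq> 0 \<and> Hgroup v \<alpha> \<beta> a1 a2 = Hgroup v \<alpha> \<beta> b (qscal \<epsilon> b)"
proof -
  obtain m1 c1 where m1: "qunit v \<alpha> \<beta> m1" "c1 \<noteq> 0"
      "qmul \<alpha> \<beta> (qmul \<alpha> \<beta> m1 a1) (qconj m1) = qscal c1 b"
    using assms(2) by (auto simp: unit_similar_def)
  obtain m2 c2 where m2: "qunit v \<alpha> \<beta> m2" "c2 \<noteq> 0"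
      "qmul \<alpha> \<beta> (qmul \<alpha> \<beta> m2 a2) (qconj m2) = qscal c2 b"
    using assms(3) by (auto simp: unit_similar_def)
  have "Hgroup v \<alpha> \<beta> a1 a2 = Hgroup v \<alpha> \<beta> b (qscal (c2 / c1) b)"
    by (rule Hgroup_eq_diag_rescale[OF v m1(1) m2(1) m1(2) m1(3) m2(3)])
  moreover have "c2 / c1 \<noteq> 0" using m1(2) m2(2) by simp
  ultimately show ?thesis by blast
qed

text \<open>An explicit Skolem--Noether element for pure quaternions of equal norm.\<close>

lemma qpure_intertwiner:
  assumes "qpure a" "qpure b" "qnorm \<alpha> \<beta> b = qnorm \<alpha> \<beta> a"
  shows "qmul \<alpha> \<beta> b (qadd a b) = qmul \<alpha> \<beta> (qadd a b) a"
  unfolding qmul_add_left qmul_add_right qpure_square[OF assms(1)] qpure_square[OF assms(2)] assms(3)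
  by (rule qadd_commute)

lemma unit_similar_qpure:
  assumes v: "dyadic_local_field v" and qd: "quat_division \<alpha> \<beta>"
    and pa: "qpure a" and pb: "qpure b" and t: "t \<noteq> 0"
    and nb: "qnorm \<alpha> \<beta> b = qnorm \<alpha> \<beta> a * t\<^sup>2"
    and ram: "ramified_ext v \<alpha> \<beta> a"
  shows "unit_similar v \<alpha> \<beta> b a"
proof -
  define b' where "b' = qscal (inverse t) b"
  have b: "b = qscal t b'" using t by (simp add: b'_def qscal_qscal)
  have nb': "qnorm \<alpha> \<beta> b' = qnorm \<alpha> \<beta> a"
    using t by (simp add: b'_def qnorm_qscal nb power_inverse field_simps)
  have pb': "qpure b'" unfolding b'_def by (rule qpure_qscal[OF pb])
  define \<mu> where "\<mu> = qadd a b'"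
  have b'_\<mu>: "qmul \<alpha> \<beta> b' \<mu> = qmul \<alpha> \<beta> \<mu> a"
    unfolding \<mu>_def by (rule qpure_intertwiner[OF pa pb' nb'])
  show ?thesis
  proof (cases "\<mu> = Q0")
    case True
    then have "b = qscal (- t) a"
      unfolding b \<mu>_def by (cases a; cases b') (simp add: add_eq_0_iff)
    then have "qmul \<alpha> \<beta> (qmul \<alpha> \<beta> (qof 1) b) (qconj (qof 1)) = qscal (- t) a"
      by (simp add: qmul_qof_left qmul_qof_right)
    then show ?thesis
      using t qunit_qof_1[OF v] unfolding unit_similar_def by (metis neg_equal_0_iff_equal)
  next
    case False
    then have n\<mu>: "qnorm \<alpha> \<beta> \<mu> \<noteq> 0" using qnorm_eq_0_iff[OF qd] by auto
    obtain x y where e: "qnorm \<alpha> \<beta> (qadd (qof x) (qscal y a)) \<noteq> 0"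
        "v (qnorm \<alpha> \<beta> (qadd (qof x) (qscal y a))) = - v (qnorm \<alpha> \<beta> \<mu>)"
      using ramified_ext_qnorm_val_surj[OF v qd ram] by blast
    define m where "m = qmul \<alpha> \<beta> \<mu> (qadd (qof x) (qscal y a))"
    have b'_m: "qmul \<alpha> \<beta> b' m = qmul \<alpha> \<beta> m a"
      unfolding m_def by (simp add: qmul_assoc[symmetric] b'_\<mu>) (simp add: qmul_assoc qsubfield_commute)
    have m_unit: "qunit v \<alpha> \<beta> (qconj m)"
      using e n\<mu> by (simp add: qunit_def m_def qnorm_mul val_mult[OF v])
    have "qmul \<alpha> \<beta> (qmul \<alpha> \<beta> (qconj m) b) (qconj (qconj m))
        = qscal t (qmul \<alpha> \<beta> (qmul \<alpha> \<beta> (qconj m) m) a)"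
      by (simp add: b qmul_scal_left qmul_scal_right qmul_assoc b'_m)
    also have "\<dots> = qscal (t * qnorm \<alpha> \<beta> m) a"
      by (simp add: qmul_qconj_left qmul_qof_left qscal_qscal)
    finally have "qmul \<alpha> \<beta> (qmul \<alpha> \<beta> (qconj m) b) (qconj (qconj m)) = qscal (t * qnorm \<alpha> \<beta> m) a"
      by simp
    moreover have "t * qnorm \<alpha> \<beta> m \<noteq> 0" using m_unit t by (simp add: qunit_def)
    ultimately show ?thesis
      using m_unit unfolding unit_similar_def by blast
  qed
qed

theorem lemma4p2:
  fixes v :: "'k::field_char_0 \<Rightarrow> int" and \<alpha> \<beta> :: 'k and a1 a2 :: "'k quat"
  assumes "dyadic_local_field v"
    and "quat_division \<alpha> \<beta>"
    and "qpure a1" and "a1 \<noteq> Quat 0 0 0 0"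
    and "qpure a2" and "a2 \<noteq> Quat 0 0 0 0"
    and "\<exists>t. t \<noteq> 0 \<and> qnorm \<alpha> \<beta> a2 = qnorm \<alpha> \<beta> a1 * t^2"
    and "ramified_ext v \<alpha> \<beta> a1"
  shows "(\<exists>q \<epsilon>. qpure q \<and> q \<noteq> Quat 0 0 0 0 \<and> \<epsilon> \<noteq> 0 \<and>
            Hgroup v \<alpha> \<beta> a1 a2 = Hgroup v \<alpha> \<beta> q (qscal \<epsilon> q)) \<and>
         (\<forall>q'. qpure q' \<and> q' \<noteq> Quat 0 0 0 0 \<and>
             (\<exists>t. t \<noteq> 0 \<and> qnorm \<alpha> \<beta> q' = qnorm \<alpha> \<beta> a1 * t^2) \<longrightarrow>
           (\<exists>\<epsilon>. \<epsilon> \<noteq> 0 \<and> Hgroup v \<alpha> \<beta> a1 a2 = Hgroup v \<alpha> \<beta> q' (qscal \<epsilon> q')))"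
proof -
  note v = assms(1) and qd = assms(2)
  have a2_a1: "unit_similar v \<alpha> \<beta> a2 a1"
    using unit_similar_qpure[OF v qd assms(3,5) _ _ assms(8)] assms(7) by blast
  have H: "\<exists>\<epsilon>. \<epsilon> \<noteq> 0 \<and> Hgroup v \<alpha> \<beta> a1 a2 = Hgroup v \<alpha> \<beta> q' (qscal \<epsilon> q')"
    if q': "qpure q'" "\<exists>t. t \<noteq> 0 \<and> qnorm \<alpha> \<beta> q' = qnorm \<alpha> \<beta> a1 * t^2" for q'
  proof -
    have a1_q': "unit_similar v \<alpha> \<beta> a1 q'"
      using unit_similar_qpure[OF v qd assms(3) q'(1) _ _ assms(8)] q'(2) unit_similar_sym by blast
    show ?thesis
      by (rule Hgroup_eq_if_unit_similar[OF v a1_q' unit_similar_trans[OF v a2_a1 a1_q']])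
  qed
  have "\<exists>t. t \<noteq> 0 \<and> qnorm \<alpha> \<beta> a1 = qnorm \<alpha> \<beta> a1 * t^2"
    by (intro exI[of _ 1]) simp
  then have "\<exists>\<epsilon>. \<epsilon> \<noteq> 0 \<and> Hgroup v \<alpha> \<beta> a1 a2 = Hgroup v \<alpha> \<beta> a1 (qscal \<epsilon> a1)"
    by (rule H[OF assms(3)])
  then show ?thesis
    using H assms(3,4) by auto
qed

end
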